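(* Let $q>1$, $p=\frac{q}{q-1}$, and assume Hypothesis (H$_q$). Then for all $x\in[a,b]$, $\lambda\in[0,1]$ and $\theta>0$, $$\big|S_f(mx,\lambda,\theta,ma,mb)\big|\le\frac{m^\theta A_4(\theta,\lambda,p)^{\frac1p}}{b-a}\Big\{(x-a)^{\theta+1}\Big(\frac{|f'(mx)|^q+\alpha m|f'(a)|^q}{\alpha+1}\Big)^{\frac1q}+(b-x)^{\theta+1}\Big(\frac{|f'(mx)|^q+\alpha m|f'(b)|^q}{\alpha+1}\Big)^{\frac1q}\Big\}.$$
   Context: Let $\Gamma$ denote Euler's Gamma function. Given $m\in(0,1]$, $a<b$, $x\in[a,b]$, $\lambda\in[0,1]$, $\theta>0$ and a function $f$ integrable on $[ma,mb]$, the Riemann–Liouville fractional integrals appearing below are $J^\theta_{(mx)^-}f(ma)=\frac{1}{\Gamma(\theta)}\int_{ma}^{mx}(s-ma)^{\theta-1}f(s)\,ds$ and $J^\theta_{(mx)^+}f(mb)=\frac{1}{\Gamma(\theta)}\int_{mx}^{mb}(mb-s)^{\theta-1}f(s)\,ds$ (each equal to $0$ if its interval of integration is degenerate), and $$S_f(mx,\lambda,\theta,ma,mb)=(1-\lambda)m^{\theta-1}\frac{(x-a)^\theta+(b-x)^\theta}{b-a}f(mx)+\lambda m^{\theta-1}\frac{(x-a)^\theta f(ma)+(b-x)^\theta f(mb)}{b-a}-\frac{\Gamma(\theta+1)}{m(b-a)}\Big[J^\theta_{(mx)^-}f(ma)+J^\theta_{(mx)^+}f(mb)\Big].$$ $(\alpha,m)$-convexity: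 for $(\alpha,m)\in[0,1]\times(0,1]$ and an interval $K\subseteq[0,\infty)$, a function $g:K\to\mathbb{R}$ is $(\alpha,m)$-convex on $K$ if $g(tX+m(1-t)Y)\le t^\alpha g(X)+m(1-t^\alpha)g(Y)$ for all $X,Y\in K$ and $t\in[0,1]$ with $tX+m(1-t)Y\in K$ (convention $0^0=1$). Hypothesis (H$_q$): $I\subseteq[0,\infty)$ is an interval, $f:I\to\mathbb{R}$ is differentiable on the interior $I^\circ$, $m\in(0,1]$, $\alpha\in[0,1]$, $a<b$ with $ma,b\in I^\circ$, $f'$ is Lebesgue integrable on $[ma,mb]$, and $|f'|^q$ is $(\alpha,m)$-convex on $[ma,b]$. $\beta(u,v)=\int_0^1t^{u-1}(1-t)^{v-1}dt$ ($u,v>0$) is the Beta function and ${}_2F_1(a',b';c';z)=\frac{1}{\beta(b',c'-b')}\int_0^1t^{b'-1}(1-t)^{c'-b'-1}(1-zt)^{-a'}dt$ ($c'>b'>0$, $|z|<1$) the hypergeometric function. For $\theta>0$, $p>1$: $A_4(\theta,\lambda,p)=\frac{1}{\theta p+1}$ if $\lambda=0$; $A_4(\theta,\lambda,p)=\frac{\lambda^{\frac{\theta p+1}{\theta}}}{\theta}\Big\{\beta\big(\tfrac1\theta,p+1\big)+\frac{(1-\lambda)^{p+1}}{p+1}\,{}_2F_1\big(\tfrac1\theta+p+1,\,p+1;\,p+2;\,1-\lambda\big)\Big\}$ if $0<\lambda<1$; $A_4(\theta,1,p)=\frac1\theta\beta\big(p+1,\tfrac1\theta\big)$. *)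

theory Defs
  imports "HOL-Analysis.Analysis"
begin

text \<open>Real power with the convention 0^0 = 1 (Isabelle's powr has 0 powr 0 = 0).\<close>
definition cpow :: "real \<Rightarrow> real \<Rightarrow> real" where
  "cpow t e = (if e = 0 then 1 else t powr e)"

definition alpha_m_convex_on :: "real \<Rightarrow> real \<Rightarrow> real set \<Rightarrow> (real \<Rightarrow> real) \<Rightarrow> bool" where
  "alpha_m_convex_on \<alpha> m K g \<longleftrightarrow>
     (\<forall>X\<in>K. \<forall>Y\<in>K. \<forall>t\<in>{0..1}. t * X + m * (1 - t) * Y \<in> K \<longrightarrow>
        g (t * X + m * (1 - t) * Y) \<le> cpow t \<alpha> * g X + m * (1 - cpow t \<alpha>) * g Y)"

text \<open>Left-sided RL integral  J^theta_{(mx)^-} f(ma) = 1/Gamma(theta) int_{ma}^{mx} (s-ma)^{theta-1} f(s) ds,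
  written with lower point u = ma and upper point v = mx.\<close>
definition RL_left :: "real \<Rightarrow> (real \<Rightarrow> real) \<Rightarrow> real \<Rightarrow> real \<Rightarrow> real" where
  "RL_left \<theta> f u v = integral {u..v} (\<lambda>s. (s - u) powr (\<theta> - 1) * f s) / Gamma \<theta>"

text \<open>Right-sided RL integral  J^theta_{(mx)^+} f(mb) = 1/Gamma(theta) int_{mx}^{mb} (mb-s)^{theta-1} f(s) ds,
  written with lower point u = mx and upper point v = mb.\<close>
definition RL_right :: "real \<Rightarrow> (real \<Rightarrow> real) \<Rightarrow> real \<Rightarrow> real \<Rightarrow> real" where
  "RL_right \<theta> f u v = integral {u..v} (\<lambda>s. (v - s) powr (\<theta> - 1) * f s) / Gamma \<theta>"

definition S_f :: "(real \<Rightarrow> real) \<Rightarrow> real \<Rightarrow> real \<Rightarrow> real \<Rightarrow> real \<Rightarrow> real \<Rightarrow> real \<Rightarrow> real" where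
  "S_f f m x lam \<theta> a b =
     (1 - lam) * m powr (\<theta> - 1) * (((x - a) powr \<theta> + (b - x) powr \<theta>) / (b - a)) * f (m * x)
     + lam * m powr (\<theta> - 1) * (((x - a) powr \<theta> * f (m * a) + (b - x) powr \<theta> * f (m * b)) / (b - a))
     - Gamma (\<theta> + 1) / (m * (b - a)) * (RL_left \<theta> f (m * a) (m * x) + RL_right \<theta> f (m * x) (m * b))"

text \<open>Gauss hypergeometric function via its Euler integral representation (c' > b' > 0, |z| < 1).\<close>
definition hyp2F1 :: "real \<Rightarrow> real \<Rightarrow> real \<Rightarrow> real \<Rightarrow> real" where
  "hyp2F1 a' b' c' z =
     integral {0..1} (\<lambda>t. t powr (b' - 1) * (1 - t) powr (c' - b' - 1) * (1 - z * t) powr (- a'))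
       / Beta b' (c' - b')"

definition A4 :: "real \<Rightarrow> real \<Rightarrow> real \<Rightarrow> real" where
  "A4 \<theta> lam p =
    (if lam = 0 then 1 / (\<theta> * p + 1)
     else if lam = 1 then Beta (p + 1) (1 / \<theta>) / \<theta>
     else lam powr ((\<theta> * p + 1) / \<theta>) / \<theta> *
       (Beta (1 / \<theta>) (p + 1)
        + (1 - lam) powr (p + 1) / (p + 1) * hyp2F1 (1 / \<theta> + p + 1) (p + 1) (p + 2) (1 - lam)))"

end

theory Submission
  imports Defs
begin

text \<open>Integrating by parts along the segment from m Y to m x (for Y = a and Y = b) turns the
  fractional integrals in S_f into the weighted integrals of (lam - t powr \<theta>) f'(t m x + m (1 - t) Y)
  over [0,1], so that (b - a) S_f is a combination of two of them.  Holder's inequality bounds each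
  by the L^p norm of lam - t powr \<theta> times the L^q norm of f' along the segment.  The former is A4:
  the substitutions t powr \<theta> = lam u below lam powr (1/\<theta>) and t powr \<theta> = lam / (1 - (1 - lam) s)
  above it produce the Beta and the Euler hypergeometric integral.  The latter is controlled by the
  (\<alpha>,m)-convexity of |f'|^q together with the integral of t powr \<alpha> over [0,1], which is 1 / (\<alpha> + 1).\<close>

lemma has_integral_substitution_inverse:
  fixes f g g' :: "real \<Rightarrow> real"
  assumes S: "finite S" and ab: "a \<le> b" and g_mono: "g a \<le> g b" and g_range: "g ` {a..b} \<subseteq> {c..d}"
    and f: "continuous_on {c..d} f" and g: "continuous_on {a..b} g"
    and g': "\<And>x. x \<in> {a..b} - S \<Longrightarrow> (g has_real_derivative g' x) (at x)"
    and K: "((\<lambda>x. g' x * f (g x)) has_integral K) {a..b}"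
  shows "(f has_integral K) {g a..g b}"
proof -
  have "((\<lambda>x. g' x *\<^sub>R f (g x)) has_integral integral {g a..g b} f) {a..b}"
    by (rule has_integral_substitution_strong[OF S ab g_mono g_range f g])
       (rule has_field_derivative_at_within[OF g'])
  then have "((\<lambda>x. g' x * f (g x)) has_integral integral {g a..g b} f) {a..b}"
    by simp
  with K have K_eq: "K = integral {g a..g b} f"
    by (rule has_integral_unique)
  have "g a \<in> {c..d}" "g b \<in> {c..d}"
    using ab g_range by (auto simp: image_subset_iff)
  then have "{g a..g b} \<subseteq> {c..d}"
    by auto
  then have "f integrable_on {g a..g b}"
    using f integrable_continuous_real continuous_on_subset by blast
  then show ?thesis
    unfolding K_eq by (rule integrable_integral)
qed

lemma Beta_right_1:
  fixes x :: real
  assumes "x > 0"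
  shows "Beta x 1 = 1 / x"
proof -
  have "x \<notin> \<int>\<^sub>\<le>\<^sub>0"
    using assms nonpos_Ints_nonpos by fastforce
  then have "Gamma (x + 1) = x * Gamma x"
    by (rule Gamma_plus1)
  moreover have "Gamma x > 0"
    using assms by simp
  ultimately show ?thesis
    by (simp add: Beta_def)
qed

lemma hyp2F1_eq_integral:
  fixes c b z :: real
  assumes "b > 0"
  shows "hyp2F1 c b (b + 1) z = b * integral {0..1} (\<lambda>t. t powr (b - 1) * (1 - z * t) powr (- c))"
proof -
  have "integral {0..1} (\<lambda>t. t powr (b - 1) * (1 - t) powr (b + 1 - b - 1) * (1 - z * t) powr (- c))
      = integral {0..1} (\<lambda>t. t powr (b - 1) * (1 - z * t) powr (- c))"
    by (rule integral_spike[of "{1}"]) (simp_all add: negligible_insert)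
  moreover have "Beta b (b + 1 - b) = 1 / b"
    using Beta_right_1[OF assms] by simp
  ultimately show ?thesis
    unfolding hyp2F1_def by simp
qed

lemma has_integral_lam_minus_powr:
  fixes \<theta> p lam :: real
  assumes \<theta>: "\<theta> > 0" and p: "p > 0" and lam: "0 < lam" "lam \<le> 1"
  shows "((\<lambda>t. (lam - t powr \<theta>) powr p) has_integral
           lam powr (p + 1/\<theta>) / \<theta> * Beta (1/\<theta>) (p + 1)) {0..lam powr (1/\<theta>)}"
proof -
  define g where "g u = (lam * u) powr (1/\<theta>)" for u
  define g' where "g' u = (1/\<theta>) * (lam * u) powr (1/\<theta> - 1) * lam" for u
  define f where "f t = (lam - t powr \<theta>) powr p" for t
  have g_powr: "g u powr \<theta> = lam * u" if "u \<ge> 0" for u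
    using that lam \<theta> by (simp add: g_def powr_powr)
  have "(f has_integral lam powr (p + 1/\<theta>) / \<theta> * Beta (1/\<theta>) (p + 1)) {g 0..g 1}"
  proof (rule has_integral_substitution_inverse[where g=g and a=0 and b=1 and S="{0}" and c=0 and d="lam powr (1/\<theta>)" and g'=g'])
    show "g ` {0..1} \<subseteq> {0..lam powr (1/\<theta>)}"
      using lam \<theta> by (auto simp: g_def mult_left_le intro!: powr_mono2)
    show "continuous_on {0..lam powr (1/\<theta>)} f"
      unfolding f_def
    proof (intro continuous_on_powr' continuous_intros ballI conjI impI)
      fix t assume t: "t \<in> {0..lam powr (1/\<theta>)}"
      have "t powr \<theta> \<le> (lam powr (1/\<theta>)) powr \<theta>"
        using t \<theta> by (intro powr_mono2) auto
      also have "\<dots> = lam"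
        using \<theta> lam by (simp add: powr_powr)
      finally show "0 \<le> lam - t powr \<theta>"
        by simp
    qed (use \<theta> p in auto)
    show "continuous_on {0..1} g"
      unfolding g_def using \<theta> lam by (intro continuous_on_powr' continuous_intros) auto
    show "(g has_real_derivative g' u) (at u)" if "u \<in> {0..1} - {0}" for u
    proof -
      have "lam * u > 0"
        using that lam by simp
      from DERIV_fun_powr[OF DERIV_cmult[OF DERIV_ident] this, of "1/\<theta>"]
      show ?thesis
        unfolding g_def g'_def by simp
    qed
    have Beta: "((\<lambda>u. lam powr (p + 1/\<theta>) / \<theta> * (u powr (1/\<theta> - 1) * (1 - u) powr (p + 1 - 1)))
        has_integral lam powr (p + 1/\<theta>) / \<theta> * Beta (1/\<theta>) (p + 1)) {0..1}"
      using has_integral_Beta_real[of "1/\<theta>" "p + 1"] \<theta> p by (intro has_integral_mult_right) simp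
    show "((\<lambda>u. g' u * f (g u)) has_integral lam powr (p + 1/\<theta>) / \<theta> * Beta (1/\<theta>) (p + 1)) {0..1}"
    proof (rule has_integral_spike_finite[OF _ _ Beta, of "{0, 1}"])
      fix u :: real
      assume "u \<in> {0..1} - {0, 1}"
      then have u: "0 < u" "u < 1"
        by auto
      have "f (g u) = lam powr p * (1 - u) powr p"
        unfolding f_def using g_powr[of u] u lam by (simp add: powr_mult[symmetric] algebra_simps)
      moreover have "g' u = (1/\<theta>) * lam powr (1/\<theta>) * u powr (1/\<theta> - 1)"
        unfolding g'_def using u lam by (simp add: powr_mult powr_diff field_simps)
      moreover have "lam powr (1/\<theta>) * lam powr p = lam powr (p + 1/\<theta>)"
        by (simp add: powr_add[symmetric] add.commute)
      ultimately show "g' u * f (g u)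
          = lam powr (p + 1/\<theta>) / \<theta> * (u powr (1/\<theta> - 1) * (1 - u) powr (p + 1 - 1))"
        by (simp add: mult_ac)
    qed simp
  qed (auto simp: g_def)
  then show ?thesis
    unfolding f_def by (simp add: g_def)
qed

text \<open>The integrand g' s * f (g s) produced by the substitution g s = (lam / w) powr (1/\<theta>),
  w = 1 - z s, in the integral of f t = (t powr \<theta> - lam) powr p.\<close>

lemma hypergeometric_substitution_integrand:
  fixes \<theta> p lam z s w :: real
  assumes \<theta>: "\<theta> > 0" and pos: "lam > 0" "z > 0" "s > 0" "w > 0" and w: "w = 1 - z * s"
  shows "(1/\<theta>) * (lam / w) powr (1/\<theta> - 1) * (lam * z / (w * w)) * (lam / w - lam) powr p
    = lam powr (p + 1/\<theta>) / \<theta> * z powr (p + 1) * (s powr p * w powr (- (1/\<theta> + p + 1)))"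
proof -
  have "lam / w - lam = (lam - lam * w) / w"
    using pos by (simp add: field_simps)
  also have "lam - lam * w = lam * z * s"
    by (simp add: w algebra_simps)
  finally have diff: "(lam / w - lam) powr p = lam powr p * z powr p * s powr p / w powr p"
    using pos by (simp add: powr_mult powr_divide)
  have quot: "(lam / w) powr (1/\<theta> - 1) = lam powr (1/\<theta> - 1) / w powr (1/\<theta> - 1)"
    using pos by (simp add: powr_divide)
  have lam_pow: "lam powr (p + 1/\<theta>) = lam powr p * lam powr (1/\<theta> - 1) * lam"
  proof -
    have "lam powr (p + 1/\<theta>) = lam powr ((p + (1/\<theta> - 1)) + 1)"
      by simp
    also have "\<dots> = lam powr p * lam powr (1/\<theta> - 1) * lam powr 1"
      by (simp only: powr_add)
    finally have "lam powr (p + 1/\<theta>) = lam powr p * lam powr (1/\<theta> - 1) * lam powr 1" .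
    then show ?thesis
      using pos by simp
  qed
  have z_pow: "z powr (p + 1) = z powr p * z"
    using pos by (simp add: powr_add)
  have w_pow: "w powr (- (1/\<theta> + p + 1)) = 1 / (w powr p * w powr (1/\<theta> - 1) * (w * w))"
  proof -
    have "w powr (p + (1/\<theta> - 1) + 2) = w powr p * w powr (1/\<theta> - 1) * w powr 2"
      by (simp only: powr_add)
    also have "w powr 2 = w * w"
      using pos by (simp add: powr_numeral power2_eq_square)
    finally have "w powr (p + (1/\<theta> - 1) + 2) = w powr p * w powr (1/\<theta> - 1) * (w * w)" .
    moreover have "w powr (- (1/\<theta> + p + 1)) = inverse (w powr (p + (1/\<theta> - 1) + 2))"
      by (simp add: powr_minus[symmetric] algebra_simps)
    ultimately show ?thesis
      by (simp add: divide_inverse)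
  qed
  define A where "A = w powr p"
  define B where "B = w powr (1/\<theta> - 1)"
  have "A \<noteq> 0" "B \<noteq> 0" "w \<noteq> 0" "\<theta> \<noteq> 0"
    using pos \<theta> by (auto simp: A_def B_def)
  then show ?thesis
    unfolding diff quot lam_pow z_pow w_pow A_def[symmetric] B_def[symmetric] by (simp add: divide_simps)
qed

lemma has_integral_powr_minus_lam:
  fixes \<theta> p lam :: real
  assumes \<theta>: "\<theta> > 0" and p: "p > 0" and lam: "0 < lam" "lam < 1"
  shows "((\<lambda>t. (t powr \<theta> - lam) powr p) has_integral
           lam powr (p + 1/\<theta>) / \<theta> * (1 - lam) powr (p + 1) *
           integral {0..1} (\<lambda>s. s powr p * (1 - (1 - lam) * s) powr (- (1/\<theta> + p + 1))))
           {lam powr (1/\<theta>)..1}"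
proof -
  define z where "z = 1 - lam"
  define C where "C = lam powr (p + 1/\<theta>) / \<theta> * z powr (p + 1)"
  define k where "k s = s powr p * (1 - z * s) powr (- (1/\<theta> + p + 1))" for s
  define h where "h s = lam / (1 - z * s)" for s
  define g where "g s = h s powr (1/\<theta>)" for s
  define g' where "g' s = (1/\<theta>) * h s powr (1/\<theta> - 1) * (lam * z / ((1 - z * s) * (1 - z * s)))" for s
  define f where "f t = (t powr \<theta> - lam) powr p" for t
  have z: "0 < z" "z < 1"
    using lam by (auto simp: z_def)
  have w_ge: "lam \<le> 1 - z * s" if "s \<in> {0..1}" for s
    using that mult_nonneg_nonneg[of z "1 - s"] z by (auto simp: z_def algebra_simps)
  have w_le: "1 - z * s \<le> 1" if "s \<in> {0..1}" for s
    using that z by auto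
  have w_pos: "1 - z * s > 0" if "s \<in> {0..1}" for s
    using w_ge[OF that] lam by linarith
  have h_pos: "h s > 0" and h_ge: "lam \<le> h s" and h_le: "h s \<le> 1" if "s \<in> {0..1}" for s
    using that w_ge[OF that] w_le[OF that] w_pos[OF that] lam
    by (auto simp: h_def field_simps mult_left_le)
  have "(f has_integral C * integral {0..1} k) {g 0..g 1}"
  proof (rule has_integral_substitution_inverse[where g=g and a=0 and b=1 and S="{}" and c="lam powr (1/\<theta>)" and d=1 and g'=g'])
    show "g ` {0..1} \<subseteq> {lam powr (1/\<theta>)..1}"
    proof
      fix y assume "y \<in> g ` {0..1}"
      then obtain s where s: "s \<in> {0..1}" "y = g s"
        by auto
      have "lam powr (1/\<theta>) \<le> h s powr (1/\<theta>)"
        using s lam \<theta> h_ge by (intro powr_mono2) auto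
      moreover have "h s powr (1/\<theta>) \<le> 1"
        using s \<theta> h_le h_pos[of s] by (intro powr_le1) auto
      ultimately show "y \<in> {lam powr (1/\<theta>)..1}"
        using s by (auto simp: g_def)
    qed
    show "continuous_on {lam powr (1/\<theta>)..1} f"
      unfolding f_def
    proof (intro continuous_on_powr' continuous_intros ballI conjI impI)
      fix t assume t: "t \<in> {lam powr (1/\<theta>)..1}"
      have "(lam powr (1/\<theta>)) powr \<theta> \<le> t powr \<theta>"
        using t \<theta> by (intro powr_mono2) auto
      also have "(lam powr (1/\<theta>)) powr \<theta> = lam"
        using \<theta> lam by (simp add: powr_powr)
      finally show "0 \<le> t powr \<theta> - lam"
        by simp
      show "0 \<le> t"
        using t lam by (meson atLeastAtMost_iff order_trans powr_ge_zero)
    qed (use \<theta> p in auto)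
    have "continuous_on {0..1} h"
      unfolding h_def using w_pos by (intro continuous_intros) force
    then show "continuous_on {0..1} g"
      unfolding g_def using h_pos \<theta> by (intro continuous_on_powr' continuous_intros) (auto intro: less_imp_le)
    show "(g has_real_derivative g' s) (at s)" if "s \<in> {0..1} - {}" for s
    proof -
      have "(h has_real_derivative lam * z / ((1 - z * s) * (1 - z * s))) (at s)"
        unfolding h_def using w_pos[of s] that
        by (auto intro!: derivative_eq_intros simp: field_simps power2_eq_square)
      from DERIV_fun_powr[OF this h_pos[of s], of "1/\<theta>"] that
      show ?thesis
        unfolding g_def g'_def by (simp add: mult.assoc)
    qed
    have "k integrable_on {0..1}"
      unfolding k_def using p w_pos
      by (intro integrable_continuous_real continuous_on_powr' continuous_intros ballI conjI impI) force+
    then have Ck: "((\<lambda>s. C * k s) has_integral C * integral {0..1} k) {0..1}"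
      by (intro has_integral_mult_right integrable_integral)
    show "((\<lambda>s. g' s * f (g s)) has_integral C * integral {0..1} k) {0..1}"
    proof (rule has_integral_spike_finite[OF _ _ Ck, of "{0, 1}"])
      fix s :: real
      assume "s \<in> {0..1} - {0, 1}"
      then have s: "0 < s" "s < 1" "s \<in> {0..1}"
        by auto
      have "g s powr \<theta> = h s"
        using h_pos[of s] s \<theta> by (simp add: g_def powr_powr)
      then show "g' s * f (g s) = C * k s"
        using hypergeometric_substitution_integrand[OF \<theta> lam(1) z(1) s(1) w_pos[OF s(3)] refl]
        by (simp add: f_def g'_def h_def C_def k_def mult_ac)
    qed simp
  qed (use lam \<theta> in \<open>auto simp: g_def h_def z_def powr_le1\<close>)
  moreover have "g 0 = lam powr (1/\<theta>)" "g 1 = 1"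
    using lam by (auto simp: g_def h_def z_def)
  ultimately show ?thesis
    unfolding f_def C_def k_def z_def by simp
qed

lemma A4_has_integral_interior:
  fixes \<theta> p lam :: real
  assumes \<theta>: "\<theta> > 0" and p: "p > 0" and lam: "0 < lam" "lam < 1"
  shows "((\<lambda>t. \<bar>lam - t powr \<theta>\<bar> powr p) has_integral A4 \<theta> lam p) {0..1}"
proof -
  define c where "c = lam powr (1/\<theta>)"
  have c: "0 \<le> c" "c \<le> 1" "c powr \<theta> = lam"
    using lam \<theta> by (auto simp: c_def powr_le1 powr_powr)
  define K where "K = integral {0..1} (\<lambda>s. s powr p * (1 - (1 - lam) * s) powr (- (1/\<theta> + p + 1)))"
  have left: "((\<lambda>t. \<bar>lam - t powr \<theta>\<bar> powr p) has_integral
      lam powr (p + 1/\<theta>) / \<theta> * Beta (1/\<theta>) (p + 1)) {0..c}"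
  proof (rule has_integral_eq[rotated])
    show "((\<lambda>t. (lam - t powr \<theta>) powr p) has_integral
        lam powr (p + 1/\<theta>) / \<theta> * Beta (1/\<theta>) (p + 1)) {0..c}"
      unfolding c_def using has_integral_lam_minus_powr[OF \<theta> p, of lam] lam by simp
    fix t :: real
    assume "t \<in> {0..c}"
    then have "t powr \<theta> \<le> c powr \<theta>"
      using \<theta> by (intro powr_mono2) auto
    then show "(lam - t powr \<theta>) powr p = \<bar>lam - t powr \<theta>\<bar> powr p"
      using c by simp
  qed
  have right: "((\<lambda>t. \<bar>lam - t powr \<theta>\<bar> powr p) has_integral
      lam powr (p + 1/\<theta>) / \<theta> * (1 - lam) powr (p + 1) * K) {c..1}"
  proof (rule has_integral_eq[rotated])
    show "((\<lambda>t. (t powr \<theta> - lam) powr p) has_integral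
        lam powr (p + 1/\<theta>) / \<theta> * (1 - lam) powr (p + 1) * K) {c..1}"
      unfolding c_def K_def using has_integral_powr_minus_lam[OF \<theta> p, of lam] lam by simp
    fix t :: real
    assume "t \<in> {c..1}"
    then have "c powr \<theta> \<le> t powr \<theta>"
      using \<theta> c by (intro powr_mono2) auto
    then show "(t powr \<theta> - lam) powr p = \<bar>lam - t powr \<theta>\<bar> powr p"
      using c by simp
  qed
  have "hyp2F1 (1/\<theta> + p + 1) (p + 1) (p + 2) (1 - lam) = (p + 1) * K"
    using hyp2F1_eq_integral[of "p + 1" "1/\<theta> + p + 1" "1 - lam"] p
    by (simp add: K_def add.assoc)
  moreover have "(\<theta> * p + 1) / \<theta> = p + 1/\<theta>"
    using \<theta> by (simp add: field_simps)
  ultimately have "A4 \<theta> lam p = lam powr (p + 1/\<theta>) / \<theta> * Beta (1/\<theta>) (p + 1)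
      + lam powr (p + 1/\<theta>) / \<theta> * (1 - lam) powr (p + 1) * K"
    using lam p by (simp add: A4_def distrib_left)
  then show ?thesis
    using has_integral_combine[OF c(1,2) left right] by simp
qed

lemma A4_has_integral:
  fixes \<theta> p lam :: real
  assumes \<theta>: "\<theta> > 0" and p: "p > 0" and lam: "0 \<le> lam" "lam \<le> 1"
  shows "((\<lambda>t. \<bar>lam - t powr \<theta>\<bar> powr p) has_integral A4 \<theta> lam p) {0..1}"
proof -
  consider "lam = 0" | "lam = 1" | "0 < lam" "lam < 1"
    using lam by force
  then show ?thesis
  proof cases
    case 1
    have "((\<lambda>t. t powr (\<theta> * p)) has_integral 1 powr (\<theta> * p + 1) / (\<theta> * p + 1)) {0..1}"
      using \<theta> p by (intro has_integral_powr_from_0) (auto intro: add_nonneg_pos less_le_trans[of "-1" 0])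
    then show ?thesis
      using 1 by (auto simp: A4_def powr_powr intro: has_integral_eq[rotated])
  next
    case 2
    have "((\<lambda>t. (1 - t powr \<theta>) powr p) has_integral A4 \<theta> lam p) {0..1}"
      using has_integral_lam_minus_powr[OF \<theta> p, of 1] 2 by (simp add: A4_def Beta_commute)
    then show ?thesis
    proof (rule has_integral_eq[rotated])
      fix t :: real
      assume "t \<in> {0..1}"
      then have "t powr \<theta> \<le> 1"
        using \<theta> by (simp add: powr_le1)
      then show "(1 - t powr \<theta>) powr p = \<bar>lam - t powr \<theta>\<bar> powr p"
        using 2 by simp
    qed
  next
    case 3
    then show ?thesis
      by (rule A4_has_integral_interior[OF \<theta> p])
  qed
qed

lemma integral_mult_le_Young:
  fixes \<phi> \<psi> C :: "'a::euclidean_space \<Rightarrow> real" and p q a b A B :: real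
  assumes pq: "p > 1" "q > 1" "1/p + 1/q = 1" and ab: "a > 0" "b > 0"
    and prod: "(\<lambda>t. \<phi> t * \<psi> t) integrable_on S"
    and A: "((\<lambda>t. \<bar>\<phi> t\<bar> powr p) has_integral A) S"
    and B: "(C has_integral B) S"
    and C: "\<And>t. t \<in> S \<Longrightarrow> \<bar>\<psi> t\<bar> powr q \<le> C t"
  shows "\<bar>integral S (\<lambda>t. \<phi> t * \<psi> t)\<bar> \<le> a * b * (A / (p * a powr p) + B / (q * b powr q))"
proof -
  define G where "G t = a * b * (\<bar>\<phi> t\<bar> powr p / (p * a powr p) + C t / (q * b powr q))" for t
  have G: "(G has_integral a * b * (A / (p * a powr p) + B / (q * b powr q))) S"
    unfolding G_def by (intro has_integral_mult_right has_integral_add has_integral_divide A B)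
  have "norm (integral S (\<lambda>t. \<phi> t * \<psi> t)) \<le> integral S G"
  proof (rule integral_norm_bound_integral[OF prod])
    show "G integrable_on S"
      using G by blast
    fix t
    assume t: "t \<in> S"
    have "(\<bar>\<phi> t\<bar> / a) * (\<bar>\<psi> t\<bar> / b) \<le> (\<bar>\<phi> t\<bar> / a) powr p / p + (\<bar>\<psi> t\<bar> / b) powr q / q"
      using pq ab by (intro Youngs_inequality) auto
    also have "\<dots> = \<bar>\<phi> t\<bar> powr p / (p * a powr p) + \<bar>\<psi> t\<bar> powr q / (q * b powr q)"
      using ab by (simp add: powr_divide mult.commute)
    also have "\<dots> \<le> \<bar>\<phi> t\<bar> powr p / (p * a powr p) + C t / (q * b powr q)"
      using ab pq C[OF t] by (intro add_left_mono divide_right_mono) auto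
    finally have "\<bar>\<phi> t\<bar> * \<bar>\<psi> t\<bar> \<le> a * b * (\<bar>\<phi> t\<bar> powr p / (p * a powr p) + C t / (q * b powr q))"
      using ab by (simp add: field_simps)
    then show "norm (\<phi> t * \<psi> t) \<le> G t"
      by (simp add: G_def abs_mult)
  qed
  then show ?thesis
    using G by (simp add: integral_unique)
qed

text \<open>The degenerate cases A = 0 or B = 0 are reached by letting the normalising constants
  A + e and B + e of Young's inequality tend to A and B.\<close>

lemma Holder_integral_le:
  fixes \<phi> \<psi> C :: "'a::euclidean_space \<Rightarrow> real" and p q A B :: real
  assumes pq: "p > 1" "q > 1" "1/p + 1/q = 1"
    and prod: "(\<lambda>t. \<phi> t * \<psi> t) integrable_on S"
    and A: "((\<lambda>t. \<bar>\<phi> t\<bar> powr p) has_integral A) S"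
    and B: "(C has_integral B) S"
    and C: "\<And>t. t \<in> S \<Longrightarrow> \<bar>\<psi> t\<bar> powr q \<le> C t"
  shows "\<bar>integral S (\<lambda>t. \<phi> t * \<psi> t)\<bar> \<le> A powr (1/p) * B powr (1/q)"
proof -
  have A_nonneg: "A \<ge> 0"
    using A by (rule has_integral_nonneg) simp
  have B_nonneg: "B \<ge> 0"
    using B by (rule has_integral_nonneg) (use C in \<open>force intro: order_trans[OF powr_ge_zero]\<close>)
  have bound: "\<bar>integral S (\<lambda>t. \<phi> t * \<psi> t)\<bar> \<le> (A + e) powr (1/p) * (B + e) powr (1/q)"
    if e: "e > 0" for e
  proof -
    define a where "a = (A + e) powr (1/p)"
    define b where "b = (B + e) powr (1/q)"
    have ab: "a > 0" "b > 0" "a powr p = A + e" "b powr q = B + e"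
      using e A_nonneg B_nonneg pq by (auto simp: a_def b_def powr_powr)
    have "\<bar>integral S (\<lambda>t. \<phi> t * \<psi> t)\<bar> \<le> a * b * (A / (p * (A + e)) + B / (q * (B + e)))"
      using integral_mult_le_Young[OF pq ab(1,2) prod A B C] ab by simp
    also have "\<dots> \<le> a * b * ((A + e) / (p * (A + e)) + (B + e) / (q * (B + e)))"
      using ab pq e A_nonneg B_nonneg by (intro mult_left_mono add_mono divide_right_mono) auto
    also have "\<dots> = a * b * (1/p + 1/q)"
      using e A_nonneg B_nonneg by simp
    finally show ?thesis
      using pq by (simp add: a_def b_def)
  qed
  have shift: "((\<lambda>e. X + e) \<longlongrightarrow> X) (at_right 0)" "eventually (\<lambda>e. X + e \<ge> 0) (at_right 0)"
    if "X \<ge> 0" for X :: real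
    using tendsto_add[OF tendsto_const[of X] tendsto_ident_at[of 0 "{0<..}"]] that
    by (auto intro: eventually_at_rightI[of 0 1])
  have "((\<lambda>e. (A + e) powr (1/p) * (B + e) powr (1/q)) \<longlongrightarrow> A powr (1/p) * B powr (1/q)) (at_right 0)"
    using pq shift[OF A_nonneg] shift[OF B_nonneg] by (intro tendsto_mult tendsto_powr' tendsto_const) auto
  moreover have "eventually (\<lambda>e. \<bar>integral S (\<lambda>t. \<phi> t * \<psi> t)\<bar> \<le> (A + e) powr (1/p) * (B + e) powr (1/q)) (at_right 0)"
    by (rule eventually_at_rightI[of 0 1]) (auto intro: bound)
  ultimately show ?thesis
    by (rule tendsto_lowerbound) simp
qed

lemma cpow_has_integral:
  fixes \<alpha> :: real
  assumes "0 \<le> \<alpha>"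
  shows "((\<lambda>t. cpow t \<alpha>) has_integral 1 / (\<alpha> + 1)) {0..1}"
proof (cases "\<alpha> = 0")
  case True
  then show ?thesis
    using has_integral_const_real[of "1::real" "0::real" 1] by (simp add: cpow_def)
next
  case False
  then have "((\<lambda>t. t powr \<alpha>) has_integral 1 powr (\<alpha> + 1) / (\<alpha> + 1)) {0..1}"
    using assms by (intro has_integral_powr_from_0) auto
  then show ?thesis
    using False by (simp add: cpow_def)
qed

lemma has_integral_alpha_m_convex_majorant:
  fixes \<alpha> m M1 M2 :: real
  assumes "0 \<le> \<alpha>"
  shows "((\<lambda>t. cpow t \<alpha> * M1 + m * (1 - cpow t \<alpha>) * M2) has_integral (M1 + \<alpha> * m * M2) / (\<alpha> + 1)) {0..1}"
proof -
  have "1 - 1 / (\<alpha> + 1) = \<alpha> / (\<alpha> + 1)"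
    using assms by (simp add: field_simps)
  then have integral_value: "1 / (\<alpha> + 1) * M1 + m * M2 * (1 - 1 / (\<alpha> + 1)) = (M1 + \<alpha> * m * M2) / (\<alpha> + 1)"
    by (simp add: add_divide_distrib)
  have "((\<lambda>t. cpow t \<alpha> * M1 + m * M2 * (1 - cpow t \<alpha>)) has_integral
      1 / (\<alpha> + 1) * M1 + m * M2 * (1 - 1 / (\<alpha> + 1))) {0..1}"
    using cpow_has_integral[OF assms] has_integral_const_real[of "1::real" "0::real" 1]
    by (intro has_integral_add has_integral_mult_left has_integral_mult_right has_integral_diff) auto
  then show ?thesis
    unfolding integral_value by (simp add: mult_ac)
qed

lemma integrable_powr_mult_continuous:
  fixes F :: "real \<Rightarrow> real" and \<theta> :: real
  assumes \<theta>: "\<theta> > 0" and F: "continuous_on {0..1} F"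
  shows "(\<lambda>t. t powr (\<theta> - 1) * F t) integrable_on {0..1}"
proof -
  have "(\<lambda>t. F t * t powr (\<theta> - 1)) absolutely_integrable_on {0..1}"
  proof (rule absolutely_integrable_bounded_measurable_product_real)
    show "F \<in> borel_measurable (lebesgue_on {0..1})"
      by (rule continuous_imp_measurable_on_sets_lebesgue[OF F]) auto
    show "bounded (F ` {0..1})"
      by (rule compact_imp_bounded[OF compact_continuous_image[OF F]]) auto
    show "(\<lambda>t. t powr (\<theta> - 1)) absolutely_integrable_on {0..1::real}"
      by (rule nonnegative_absolutely_integrable_1[OF integrable_on_powr_from_0]) (use \<theta> in auto)
  qed auto
  then show ?thesis
    unfolding absolutely_integrable_on_def by (simp add: mult.commute)
qed

text \<open>The derivative of the weight t powr \<theta> is the Riemann--Liouville kernel, so integrating by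
  parts along the path from P to Q produces the fractional integral of f.\<close>

lemma has_integral_weighted_path_derivative:
  fixes f f' :: "real \<Rightarrow> real" and P Q \<theta> lam :: real
  assumes \<theta>: "\<theta> > 0"
    and der: "\<And>t. t \<in> {0..1} \<Longrightarrow> (f has_real_derivative f' (P + t * (Q - P))) (at (P + t * (Q - P)))"
  shows "((\<lambda>t. (lam - t powr \<theta>) * ((Q - P) * f' (P + t * (Q - P)))) has_integral
      lam * (f Q - f P) - f Q + \<theta> * integral {0..1} (\<lambda>t. t powr (\<theta> - 1) * f (P + t * (Q - P)))) {0..1}"
proof -
  define F where "F t = f (P + t * (Q - P))" for t
  define F' where "F' t = (Q - P) * f' (P + t * (Q - P))" for t
  define T where "T t = t powr (\<theta> - 1) * F t" for t
  have F_deriv: "(F has_real_derivative F' t) (at t)" if "t \<in> {0..1}" for t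
  proof -
    have "((\<lambda>t. P + t * (Q - P)) has_real_derivative Q - P) (at t)"
      by (auto intro!: derivative_eq_intros)
    from DERIV_chain2[OF der[OF that] this] show ?thesis
      unfolding F_def F'_def by (simp add: mult.commute)
  qed
  then have F_cont: "continuous_on {0..1} F"
    by (meson DERIV_continuous continuous_at_imp_continuous_on)
  have T: "(T has_integral integral {0..1} T) {0..1}"
    unfolding T_def using integrable_powr_mult_continuous[OF \<theta> F_cont] by blast
  have F'_int: "(F' has_integral F 1 - F 0) {0..1}"
    using F_deriv by (intro fundamental_theorem_of_calculus)
      (auto simp: has_real_derivative_iff_has_vector_derivative[symmetric] intro: has_field_derivative_at_within)
  have parts: "((\<lambda>t. \<theta> * T t + t powr \<theta> * F' t) has_integral F 1) {0..1}"
  proof -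
    have "((\<lambda>t. \<theta> * T t + t powr \<theta> * F' t) has_integral 1 powr \<theta> * F 1 - 0 powr \<theta> * F 0) {0..1}"
    proof (rule fundamental_theorem_of_calculus_interior)
      show "continuous_on {0..1} (\<lambda>t. t powr \<theta> * F t)"
        by (intro continuous_intros continuous_on_powr' F_cont) (use \<theta> in auto)
      fix t :: real
      assume t: "t \<in> {0<..<1}"
      have "((\<lambda>t. t powr \<theta>) has_real_derivative \<theta> * t powr (\<theta> - 1)) (at t)"
        using t by (intro has_real_derivative_powr) auto
      from DERIV_mult[OF this F_deriv] t
      show "((\<lambda>t. t powr \<theta> * F t) has_vector_derivative \<theta> * T t + t powr \<theta> * F' t) (at t)"
        by (simp add: has_real_derivative_iff_has_vector_derivative[symmetric] T_def mult_ac)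
    qed simp
    then show ?thesis
      by simp
  qed
  have "((\<lambda>t. lam * F' t - (\<theta> * T t + t powr \<theta> * F' t) + \<theta> * T t) has_integral
      lam * (F 1 - F 0) - F 1 + \<theta> * integral {0..1} T) {0..1}"
    by (intro has_integral_add has_integral_diff has_integral_mult_right F'_int parts T)
  then have "((\<lambda>t. (lam - t powr \<theta>) * F' t) has_integral lam * (F 1 - F 0) - F 1 + \<theta> * integral {0..1} T) {0..1}"
    by (rule has_integral_eq[rotated]) (simp add: algebra_simps)
  then show ?thesis
    unfolding F_def F'_def T_def by simp
qed

lemma has_integral_powr_kernel_affine:
  fixes f :: "real \<Rightarrow> real" and P w \<theta> :: real
  assumes w: "w \<noteq> 0"
    and T: "(\<lambda>t. t powr (\<theta> - 1) * f (P + t * w)) integrable_on {0..1}"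
  shows "((\<lambda>s. ((s - P) / w) powr (\<theta> - 1) * f s) has_integral
      \<bar>w\<bar> * integral {0..1} (\<lambda>t. t powr (\<theta> - 1) * f (P + t * w))) ((\<lambda>t. w * t + P) ` {0..1})"
proof -
  define T where "T t = t powr (\<theta> - 1) * f (P + t * w)" for t
  have "(T has_integral integral {0..1} T) (cbox 0 1)"
    using T unfolding T_def by (simp add: has_integral_integral)
  from has_integral_affinity[OF this, of "1/w" "- P / w"] w
  have "((\<lambda>s. T ((1/w) * s + - P / w)) has_integral \<bar>w\<bar> * integral {0..1} T) ((\<lambda>t. w * t + P) ` {0..1})"
    by (simp add: divide_simps)
  moreover have "T ((1/w) * s + - P / w) = ((s - P) / w) powr (\<theta> - 1) * f s" for s
    unfolding T_def using w by (simp add: field_simps)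
  ultimately show ?thesis
    unfolding T_def by simp
qed

lemma affine_path_in_interval:
  fixes P Q t u v :: real
  assumes "P \<in> {u..v}" "Q \<in> {u..v}" "t \<in> {0..1}"
  shows "P + t * (Q - P) \<in> {u..v}"
proof -
  have "(1 - t) *\<^sub>R P + t *\<^sub>R Q \<in> {u..v}"
    using assms by (intro convexD[OF convex_real_interval(5)]) auto
  then show ?thesis
    by (simp add: algebra_simps)
qed

lemma RL_left_eq_integral_unit:
  fixes f :: "real \<Rightarrow> real" and \<theta> P Q :: real
  assumes \<theta>: "\<theta> > 0" and PQ: "P \<le> Q" and f: "continuous_on {P..Q} f"
  shows "RL_left \<theta> f P Q
    = (Q - P) powr \<theta> * integral {0..1} (\<lambda>t. t powr (\<theta> - 1) * f (P + t * (Q - P))) / Gamma \<theta>"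
proof (cases "P = Q")
  case True
  then show ?thesis
    using \<theta> by (simp add: RL_left_def)
next
  case False
  define w where "w = Q - P"
  have w: "w > 0"
    using PQ False by (simp add: w_def)
  define IT where "IT = integral {0..1} (\<lambda>t. t powr (\<theta> - 1) * f (P + t * w))"
  have "(\<lambda>t. P + t * w) ` {0..1} \<subseteq> {P..Q}"
    using affine_path_in_interval[of P P Q Q] PQ by (auto simp: w_def)
  then have "continuous_on {0..1} (\<lambda>t. f (P + t * w))"
    by (intro continuous_on_compose2[OF f] continuous_intros)
  then have "((\<lambda>s. ((s - P) / w) powr (\<theta> - 1) * f s) has_integral w * IT) {P..Q}"
    using has_integral_powr_kernel_affine[of w \<theta> f P] integrable_powr_mult_continuous[OF \<theta>] w
    by (simp add: IT_def image_affinity_atLeastAtMost w_def)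
  then have "((\<lambda>s. w powr (\<theta> - 1) * (((s - P) / w) powr (\<theta> - 1) * f s)) has_integral w powr (\<theta> - 1) * (w * IT)) {P..Q}"
    by (rule has_integral_mult_right)
  then have "((\<lambda>s. (s - P) powr (\<theta> - 1) * f s) has_integral w powr \<theta> * IT) {P..Q}"
    using w by (auto simp: powr_divide powr_diff intro: has_integral_eq[rotated])
  then show ?thesis
    by (simp add: RL_left_def integral_unique IT_def w_def)
qed

lemma RL_right_eq_integral_unit:
  fixes f :: "real \<Rightarrow> real" and \<theta> P Q :: real
  assumes \<theta>: "\<theta> > 0" and QP: "Q \<le> P" and f: "continuous_on {Q..P} f"
  shows "RL_right \<theta> f Q P
    = (P - Q) powr \<theta> * integral {0..1} (\<lambda>t. t powr (\<theta> - 1) * f (P + t * (Q - P))) / Gamma \<theta>"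
proof (cases "P = Q")
  case True
  then show ?thesis
    using \<theta> by (simp add: RL_right_def)
next
  case False
  define r where "r = P - Q"
  have r: "r > 0"
    using QP False by (simp add: r_def)
  define IT where "IT = integral {0..1} (\<lambda>t. t powr (\<theta> - 1) * f (P + t * - r))"
  have "(\<lambda>t. P + t * - r) ` {0..1} \<subseteq> {Q..P}"
    using affine_path_in_interval[of P Q P Q] QP by (auto simp: r_def)
  then have "continuous_on {0..1} (\<lambda>t. f (P + t * - r))"
    by (intro continuous_on_compose2[OF f] continuous_intros)
  then have "((\<lambda>s. ((s - P) / - r) powr (\<theta> - 1) * f s) has_integral r * IT) {Q..P}"
    using has_integral_powr_kernel_affine[of "- r" \<theta> f P] integrable_powr_mult_continuous[OF \<theta>] r
    by (simp add: IT_def image_affinity_atLeastAtMost r_def)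
  moreover have "r powr (\<theta> - 1) * (r * IT) = r powr \<theta> * IT"
    using r by (simp add: powr_diff)
  ultimately have "((\<lambda>s. r powr (\<theta> - 1) * (((s - P) / - r) powr (\<theta> - 1) * f s)) has_integral r powr \<theta> * IT) {Q..P}"
    by (metis has_integral_mult_right)
  then have "((\<lambda>s. (P - s) powr (\<theta> - 1) * f s) has_integral r powr \<theta> * IT) {Q..P}"
  proof (rule has_integral_eq[rotated])
    fix s
    assume "s \<in> {Q..P}"
    then have "(s - P) / - r = (P - s) / r" "P - s \<ge> 0"
      using r by (auto simp: field_simps)
    then show "r powr (\<theta> - 1) * (((s - P) / - r) powr (\<theta> - 1) * f s) = (P - s) powr (\<theta> - 1) * f s"
      using r by (simp add: powr_divide)
  qed
  then show ?thesis
    by (simp add: RL_right_def integral_unique IT_def r_def)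
qed

text \<open>The factor Q - P stays inside the integrand so that identities with side_integral also hold
  for the degenerate path P = Q.\<close>

definition side_integral :: "real \<Rightarrow> real \<Rightarrow> (real \<Rightarrow> real) \<Rightarrow> real \<Rightarrow> real \<Rightarrow> real" where
  "side_integral lam \<theta> f P Q =
     integral {0..1} (\<lambda>t. (lam - t powr \<theta>) * ((Q - P) * deriv f (P + t * (Q - P))))"

lemma RL_term_eq_side_term:
  fixes \<theta> m d lam F F0 IT :: real
  assumes \<theta>: "\<theta> > 0" and m: "m > 0" and d: "d \<ge> 0"
  shows "m powr (\<theta> - 1) * d powr \<theta> * ((1 - lam) * F + lam * F0)
      - Gamma (\<theta> + 1) / m * ((m * d) powr \<theta> * IT / Gamma \<theta>)
    = - (m powr (\<theta> - 1) * d powr \<theta> * (lam * (F - F0) - F + \<theta> * IT))"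
proof -
  define K where "K = (m * d) powr \<theta>"
  have "Gamma (\<theta> + 1) = \<theta> * Gamma \<theta>"
    using \<theta> by (intro Gamma_plus1) (auto dest: nonpos_Ints_nonpos)
  moreover have "Gamma \<theta> > 0"
    using \<theta> by simp
  ultimately have "Gamma (\<theta> + 1) / m * (K * IT / Gamma \<theta>) = \<theta> * IT * (K / m)"
    using m by (simp add: field_simps)
  moreover have "K / m = m powr (\<theta> - 1) * d powr \<theta>"
    using m d by (simp add: K_def powr_mult powr_diff)
  ultimately show ?thesis
    unfolding K_def[symmetric] by (simp add: algebra_simps)
qed

lemma S_f_split:
  fixes f :: "real \<Rightarrow> real" and m x lam \<theta> a b :: real
  assumes "m \<noteq> 0" "a \<noteq> b"
  shows "S_f f m x lam \<theta> a b =
    ((m powr (\<theta> - 1) * (x - a) powr \<theta> * ((1 - lam) * f (m * x) + lam * f (m * a))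
        - Gamma (\<theta> + 1) / m * RL_left \<theta> f (m * a) (m * x))
     + (m powr (\<theta> - 1) * (b - x) powr \<theta> * ((1 - lam) * f (m * x) + lam * f (m * b))
        - Gamma (\<theta> + 1) / m * RL_right \<theta> f (m * x) (m * b))) / (b - a)"
proof -
  have "(1 - lam) * K * ((U + V) / D) * F + lam * K * ((U * Fa + V * Fb) / D) - G / (m * D) * (RL + RR)
      = ((K * U * ((1 - lam) * F + lam * Fa) - G / m * RL) + (K * V * ((1 - lam) * F + lam * Fb) - G / m * RR)) / D"
    if "D \<noteq> 0" for K U V D G RL RR F Fa Fb :: real
    using that assms by (simp add: field_simps)
  then show ?thesis
    unfolding S_f_def using assms by simp
qed

lemma S_f_eq_side_integrals:
  fixes f :: "real \<Rightarrow> real" and m x lam \<theta> a b :: real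
  assumes \<theta>: "\<theta> > 0" and m: "m > 0" and x: "x \<in> {a..b}" and ab: "a < b"
    and der: "\<And>y. y \<in> {m * a..m * b} \<Longrightarrow> (f has_real_derivative deriv f y) (at y)"
  shows "S_f f m x lam \<theta> a b = - (m powr (\<theta> - 1) *
      ((x - a) powr \<theta> * side_integral lam \<theta> f (m * a) (m * x)
       + (b - x) powr \<theta> * side_integral lam \<theta> f (m * b) (m * x)) / (b - a))"
proof -
  have mx: "m * x \<in> {m * a..m * b}"
    using x m by auto
  have "continuous_on {m * a..m * b} f"
    using der by (meson DERIV_continuous continuous_at_imp_continuous_on)
  then have f_cont: "continuous_on {m * a..m * x} f" "continuous_on {m * x..m * b} f"
    using mx by (auto intro: continuous_on_subset)
  have side: "m powr (\<theta> - 1) * d powr \<theta> * ((1 - lam) * f (m * x) + lam * f P)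
      - Gamma (\<theta> + 1) / m * ((m * d) powr \<theta> *
          integral {0..1} (\<lambda>t. t powr (\<theta> - 1) * f (P + t * (m * x - P))) / Gamma \<theta>)
    = - (m powr (\<theta> - 1) * d powr \<theta> * side_integral lam \<theta> f P (m * x))"
    if P: "P \<in> {m * a..m * b}" and d: "d \<ge> 0" for P d
  proof -
    have "((\<lambda>t. (lam - t powr \<theta>) * ((m * x - P) * deriv f (P + t * (m * x - P)))) has_integral
        lam * (f (m * x) - f P) - f (m * x)
        + \<theta> * integral {0..1} (\<lambda>t. t powr (\<theta> - 1) * f (P + t * (m * x - P)))) {0..1}"
      using P mx by (intro has_integral_weighted_path_derivative \<theta> der affine_path_in_interval)
    then show ?thesis
      unfolding side_integral_def using RL_term_eq_side_term[OF \<theta> m d] by (simp add: integral_unique)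
  qed
  have "RL_left \<theta> f (m * a) (m * x) = (m * (x - a)) powr \<theta> *
      integral {0..1} (\<lambda>t. t powr (\<theta> - 1) * f (m * a + t * (m * x - m * a))) / Gamma \<theta>"
    using x m by (subst RL_left_eq_integral_unit[OF \<theta>]) (auto intro: f_cont simp: right_diff_distrib)
  then have left: "m powr (\<theta> - 1) * (x - a) powr \<theta> * ((1 - lam) * f (m * x) + lam * f (m * a))
      - Gamma (\<theta> + 1) / m * RL_left \<theta> f (m * a) (m * x)
    = - (m powr (\<theta> - 1) * (x - a) powr \<theta> * side_integral lam \<theta> f (m * a) (m * x))"
    using side[of "m * a" "x - a"] x m by simp
  have "RL_right \<theta> f (m * x) (m * b) = (m * (b - x)) powr \<theta> *
      integral {0..1} (\<lambda>t. t powr (\<theta> - 1) * f (m * b + t * (m * x - m * b))) / Gamma \<theta>"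
    using x m by (subst RL_right_eq_integral_unit[OF \<theta>]) (auto intro: f_cont simp: right_diff_distrib)
  then have right: "m powr (\<theta> - 1) * (b - x) powr \<theta> * ((1 - lam) * f (m * x) + lam * f (m * b))
      - Gamma (\<theta> + 1) / m * RL_right \<theta> f (m * x) (m * b)
    = - (m powr (\<theta> - 1) * (b - x) powr \<theta> * side_integral lam \<theta> f (m * b) (m * x))"
    using side[of "m * b" "b - x"] x m by simp
  have "S_f f m x lam \<theta> a b =
    ((m powr (\<theta> - 1) * (x - a) powr \<theta> * ((1 - lam) * f (m * x) + lam * f (m * a))
        - Gamma (\<theta> + 1) / m * RL_left \<theta> f (m * a) (m * x))
     + (m powr (\<theta> - 1) * (b - x) powr \<theta> * ((1 - lam) * f (m * x) + lam * f (m * b))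
        - Gamma (\<theta> + 1) / m * RL_right \<theta> f (m * x) (m * b))) / (b - a)"
    using m ab by (intro S_f_split) auto
  also have "\<dots> = - (m powr (\<theta> - 1) *
      ((x - a) powr \<theta> * side_integral lam \<theta> f (m * a) (m * x)
       + (b - x) powr \<theta> * side_integral lam \<theta> f (m * b) (m * x)) / (b - a))"
    unfolding left right by (simp add: diff_divide_distrib add_divide_distrib[symmetric] algebra_simps)
  finally show ?thesis .
qed

lemma alpha_m_segment_mem:
  fixes m a b x Y t :: real
  assumes a: "0 \<le> a" and m: "m \<in> {0<..1}" and x: "x \<in> {a..b}" and Y: "Y \<in> {a..b}"
  shows "m * x \<in> {m * a..b}" "Y \<in> {m * a..b}"
    and "t \<in> {0..1} \<Longrightarrow> t * (m * x) + m * (1 - t) * Y \<in> {m * a..b}"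
proof -
  have scaled: "m * z \<in> {m * a..b}" if "z \<in> {a..b}" for z
    using that a m mult_left_le_one_le[of z m] by auto
  then show "m * x \<in> {m * a..b}"
    using x by blast
  show "Y \<in> {m * a..b}"
    using Y a m mult_left_le_one_le[of a m] by auto
  assume "t \<in> {0..1}"
  then have "t *\<^sub>R (m * x) + (1 - t) *\<^sub>R (m * Y) \<in> {m * a..b}"
    using scaled[OF x] scaled[OF Y] by (intro convexD[OF convex_real_interval(5)]) auto
  then show "t * (m * x) + m * (1 - t) * Y \<in> {m * a..b}"
    by (simp add: algebra_simps)
qed

lemma side_integral_bound:
  fixes f :: "real \<Rightarrow> real" and q p \<theta> lam \<alpha> m a b x Y :: real
  assumes q: "q > 1" and p: "p = q / (q - 1)" and \<theta>: "\<theta> > 0"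
    and lam: "lam \<in> {0..1}" and \<alpha>: "\<alpha> \<in> {0..1}" and m: "m \<in> {0<..1}"
    and a: "0 \<le> a" and x: "x \<in> {a..b}" and Y: "Y \<in> {a..b}"
    and der: "\<And>y. y \<in> {m * a..b} \<Longrightarrow> (f has_real_derivative deriv f y) (at y)"
    and conv: "alpha_m_convex_on \<alpha> m {m * a..b} (\<lambda>s. \<bar>deriv f s\<bar> powr q)"
  shows "\<bar>side_integral lam \<theta> f (m * Y) (m * x)\<bar> \<le> m * \<bar>x - Y\<bar> * A4 \<theta> lam p powr (1/p) *
      ((\<bar>deriv f (m * x)\<bar> powr q + \<alpha> * m * \<bar>deriv f Y\<bar> powr q) / (\<alpha> + 1)) powr (1/q)"
proof -
  define w where "w = m * x - m * Y"
  define M1 where "M1 = \<bar>deriv f (m * x)\<bar> powr q"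
  define M2 where "M2 = \<bar>deriv f Y\<bar> powr q"
  define B where "B = (M1 + \<alpha> * m * M2) / (\<alpha> + 1)"
  define C where "C t = \<bar>w\<bar> powr q * (cpow t \<alpha> * M1 + m * (1 - cpow t \<alpha>) * M2)" for t
  have pq: "p > 1" "1/p + 1/q = 1"
    using q by (auto simp: p field_simps)
  have path: "m * Y + t * w = t * (m * x) + m * (1 - t) * Y" for t
    by (simp add: w_def algebra_simps)
  have "m * Y + t * w \<in> {m * a..b}" if "t \<in> {0..1}" for t
    unfolding path using alpha_m_segment_mem(3)[OF a m x Y that] .
  then have prod: "(\<lambda>t. (lam - t powr \<theta>) * (w * deriv f (m * Y + t * w))) integrable_on {0..1}"
    using has_integral_weighted_path_derivative[OF \<theta>, of f "deriv f" "m * Y" "m * x" lam] der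
    unfolding w_def by blast
  have A: "((\<lambda>t. \<bar>lam - t powr \<theta>\<bar> powr p) has_integral A4 \<theta> lam p) {0..1}"
    using A4_has_integral[OF \<theta> _, of p lam] pq lam by simp
  have "((\<lambda>t. cpow t \<alpha> * M1 + m * (1 - cpow t \<alpha>) * M2) has_integral B) {0..1}"
    unfolding B_def using \<alpha> by (intro has_integral_alpha_m_convex_majorant) simp
  then have B: "(C has_integral \<bar>w\<bar> powr q * B) {0..1}"
    unfolding C_def by (rule has_integral_mult_right)
  have majorant: "\<bar>w * deriv f (m * Y + t * w)\<bar> powr q \<le> C t" if t: "t \<in> {0..1}" for t
  proof -
    have "\<bar>deriv f (t * (m * x) + m * (1 - t) * Y)\<bar> powr q \<le> cpow t \<alpha> * M1 + m * (1 - cpow t \<alpha>) * M2"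
      using conv alpha_m_segment_mem[OF a m x Y] t unfolding alpha_m_convex_on_def M1_def M2_def by blast
    then show ?thesis
      unfolding C_def path by (simp add: abs_mult powr_mult mult_left_mono)
  qed
  have "\<bar>side_integral lam \<theta> f (m * Y) (m * x)\<bar> \<le> A4 \<theta> lam p powr (1/p) * (\<bar>w\<bar> powr q * B) powr (1/q)"
    unfolding side_integral_def w_def[symmetric]
    using Holder_integral_le[OF pq(1) q pq(2) prod A B majorant] by simp
  also have "(\<bar>w\<bar> powr q * B) powr (1/q) = \<bar>w\<bar> * B powr (1/q)"
  proof -
    have "B \<ge> 0"
      using \<alpha> m by (simp add: B_def M1_def M2_def)
    then show ?thesis
      using q by (simp add: powr_mult powr_powr)
  qed
  also have "\<bar>w\<bar> = m * \<bar>x - Y\<bar>"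
    using m by (simp add: w_def abs_mult flip: right_diff_distrib)
  finally show ?thesis
    by (simp add: B_def M1_def M2_def mult_ac)
qed

lemma nonneg_and_DERIV_on_interior_segment:
  fixes f :: "real \<Rightarrow> real" and I :: "real set" and m a b :: real
  assumes I_int: "is_interval I" and I_nonneg: "I \<subseteq> {0..}"
    and f_diff: "\<forall>y\<in>interior I. f differentiable (at y)"
    and m: "m \<in> {0<..1}" and ab: "a < b" and ma: "m * a \<in> interior I" and b: "b \<in> interior I"
  shows "a \<ge> 0"
    and "\<And>y. y \<in> {m * a..b} \<Longrightarrow> (f has_real_derivative deriv f y) (at y)"
proof -
  show a: "a \<ge> 0"
    using ma interior_subset I_nonneg m by (fastforce simp: zero_le_mult_iff)
  have "closed_segment (m * a) b \<subseteq> interior I"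
    using ma b convex_interior[OF is_interval_convex[OF I_int]] by (simp add: convex_contains_segment)
  moreover have "m * a \<le> b"
    using a ab m mult_left_le_one_le[of a m] by simp
  ultimately have "{m * a..b} \<subseteq> interior I"
    by (simp add: closed_segment_eq_real_ivl)
  then show "(f has_real_derivative deriv f y) (at y)" if "y \<in> {m * a..b}" for y
    using f_diff that DERIV_deriv_iff_real_differentiable by blast
qed

theorem theorem2p4:
  fixes f :: "real \<Rightarrow> real" and I :: "real set"
    and m \<alpha> a b q p x lam \<theta> :: real
  assumes hq: "q > 1" and hp: "p = q / (q - 1)"
    and I_int: "is_interval I" and I_nonneg: "I \<subseteq> {0..}"
    and f_diff: "\<forall>y\<in>interior I. f differentiable (at y)"
    and hm: "m \<in> {0<..1}" and h\<alpha>: "\<alpha> \<in> {0..1}"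
    and hab: "a < b" and hma: "m * a \<in> interior I" and hb: "b \<in> interior I"
    and f'_int: "set_integrable lborel {m * a..m * b} (deriv f)"
    and conv: "alpha_m_convex_on \<alpha> m {m * a..b} (\<lambda>s. \<bar>deriv f s\<bar> powr q)"
    and hx: "x \<in> {a..b}" and hlam: "lam \<in> {0..1}" and h\<theta>: "\<theta> > 0"
  shows "\<bar>S_f f m x lam \<theta> a b\<bar>
    \<le> m powr \<theta> * A4 \<theta> lam p powr (1 / p) / (b - a) *
       ((x - a) powr (\<theta> + 1) *
          ((\<bar>deriv f (m * x)\<bar> powr q + \<alpha> * m * \<bar>deriv f a\<bar> powr q) / (\<alpha> + 1)) powr (1 / q)
      + (b - x) powr (\<theta> + 1) *
          ((\<bar>deriv f (m * x)\<bar> powr q + \<alpha> * m * \<bar>deriv f b\<bar> powr q) / (\<alpha> + 1)) powr (1 / q))"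
proof -
  have m: "m > 0"
    using hm by simp
  note a = nonneg_and_DERIV_on_interior_segment(1)[OF I_int I_nonneg f_diff hm hab hma hb]
  note der = nonneg_and_DERIV_on_interior_segment(2)[OF I_int I_nonneg f_diff hm hab hma hb]
  have "m * b \<le> b"
    using a hab hm mult_left_le_one_le[of b m] by simp
  then have S: "S_f f m x lam \<theta> a b = - (m powr (\<theta> - 1) *
      ((x - a) powr \<theta> * side_integral lam \<theta> f (m * a) (m * x)
       + (b - x) powr \<theta> * side_integral lam \<theta> f (m * b) (m * x)) / (b - a))"
    using h\<theta> m hx hab der by (intro S_f_eq_side_integrals) auto
  define A where "A = A4 \<theta> lam p powr (1 / p)"
  define B where "B Y = ((\<bar>deriv f (m * x)\<bar> powr q + \<alpha> * m * \<bar>deriv f Y\<bar> powr q) / (\<alpha> + 1)) powr (1 / q)" for Y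
  define J where "J Y = \<bar>side_integral lam \<theta> f (m * Y) (m * x)\<bar>" for Y
  have J: "J Y \<le> m * d * A * B Y" if "Y \<in> {a..b}" "d = \<bar>x - Y\<bar>" for Y d
    using side_integral_bound[OF hq hp h\<theta> hlam h\<alpha> hm a hx that(1) der conv] that(2)
    by (simp add: A_def B_def J_def)
  have "\<bar>S_f f m x lam \<theta> a b\<bar> = m powr (\<theta> - 1) / (b - a) *
      \<bar>(x - a) powr \<theta> * side_integral lam \<theta> f (m * a) (m * x)
       + (b - x) powr \<theta> * side_integral lam \<theta> f (m * b) (m * x)\<bar>"
    unfolding S using hab by (simp add: abs_mult)
  also have "\<dots> \<le> m powr (\<theta> - 1) / (b - a) * ((x - a) powr \<theta> * J a + (b - x) powr \<theta> * J b)"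
    using hab unfolding J_def
    by (intro mult_left_mono) (auto simp: abs_mult intro: abs_triangle_ineq[THEN order_trans])
  also have "\<dots> \<le> m powr (\<theta> - 1) / (b - a) *
      ((x - a) powr \<theta> * (m * (x - a) * A * B a) + (b - x) powr \<theta> * (m * (b - x) * A * B b))"
    using hab hx J[of a "x - a"] J[of b "b - x"] by (intro mult_left_mono add_mono) auto
  also have "\<dots> = m powr \<theta> * A / (b - a) *
      ((x - a) powr (\<theta> + 1) * B a + (b - x) powr (\<theta> + 1) * B b)"
    using m hab hx by (simp add: powr_add powr_diff field_simps)
  finally show ?thesis
    by (simp add: A_def B_def)
qed

end
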